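(* Let $\mathbf{A},\mathbf{B},\mathbf{C}$ be trees with $\mathbf{A}$ finite. If $\mathbf{A}\mathbf{B}=\mathbf{A}\mathbf{C}$, then $[\mathbf{B}]_{\operatorname{depth}(\mathbf{A})}=[\mathbf{C}]_{\operatorname{depth}(\mathbf{A})}$.
   Context: A tree is a (possibly empty, possibly infinite) rooted in-tree in which every vertex has finitely many in-neighbours: an acyclic weakly connected digraph with a root having no outgoing arc, every other vertex having exactly one outgoing arc (to its parent), arcs directed towards the root. Trees are considered up to isomorphism. The depth of a vertex is its distance to the root; the depth of a tree is the supremum of the depths of its vertices ($-1$ for the empty tree, $\infty$ for an infinite tree). For $k\in\mathbb{N}\cup\{-1\}$, $[\mathbf{T}]_k$ is the subtree of vertices of depth at most $k$. The product of trees $\mathbf{F},\mathbf{G}$ has vertex set $\{(a,b):\operatorname{depth}(a)=\operatorname{depth}(b)\}$ and an arc $(a,b)\to(a',b')$ whenever $a\to a'$ and $b\to b'$ are arcs of $\mathbf{F}$ and $\mathbf{G}$ respectively. *)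

theory Defs
  imports Main
begin

text \<open>A digraph is a pair (V, E) of a vertex set and an arc set.
  Arcs point from a vertex to its parent (towards the root).\<close>
type_synonym 'a digraph = "'a set \<times> ('a \<times> 'a) set"

definition is_tree :: "'a digraph \<Rightarrow> bool" where
  "is_tree T \<longleftrightarrow>
     (let V = fst T; E = snd T in
        E \<subseteq> V \<times> V
      \<and> (V = {} \<or> (\<exists>r\<in>V. (\<forall>y. (r, y) \<notin> E) \<and> (\<forall>v\<in>V - {r}. \<exists>!w. (v, w) \<in> E)))
      \<and> acyclic E
      \<and> (\<forall>u\<in>V. \<forall>v\<in>V. (u, v) \<in> (E \<union> E\<inverse>)\<^sup>*)
      \<and> (\<forall>v\<in>V. finite {u. (u, v) \<in> E}))"

definition tree_root :: "'a digraph \<Rightarrow> 'a" where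
  "tree_root T = (THE r. r \<in> fst T \<and> (\<forall>y. (r, y) \<notin> snd T))"

definition vdepth :: "'a digraph \<Rightarrow> 'a \<Rightarrow> nat" where
  "vdepth T v = (LEAST n. (v, tree_root T) \<in> (snd T) ^^ n)"

definition fin_depth :: "'a digraph \<Rightarrow> int" where
  "fin_depth T = (if fst T = {} then -1 else int (Max (vdepth T ` fst T)))"

definition trunc :: "'a digraph \<Rightarrow> int \<Rightarrow> 'a digraph" where
  "trunc T k = (let V' = {v \<in> fst T. int (vdepth T v) \<le> k}
                in (V', snd T \<inter> (V' \<times> V')))"

definition tprod :: "'a digraph \<Rightarrow> 'b digraph \<Rightarrow> ('a \<times> 'b) digraph" where
  "tprod F G = (let V = {(a, b). a \<in> fst F \<and> b \<in> fst G \<and> vdepth F a = vdepth G b}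
                in (V, {((a, b), (a', b')). (a, b) \<in> V \<and> (a', b') \<in> V
                          \<and> (a, a') \<in> snd F \<and> (b, b') \<in> snd G}))"

definition dg_iso :: "'a digraph \<Rightarrow> 'b digraph \<Rightarrow> bool" where
  "dg_iso G H \<longleftrightarrow> (\<exists>f. bij_betw f (fst G) (fst H)
       \<and> (\<forall>u\<in>fst G. \<forall>v\<in>fst G. (u, v) \<in> snd G \<longleftrightarrow> (f u, f v) \<in> snd H))"

end

theory Submission
  imports Defs "HOL-Library.Multiset"
begin

text \<open>For finite rooted trees \<open>X\<close>, \<open>T\<close> let \<open>hom(X, T)\<close> count the maps sending the root to
  the root and children to children. A map into a product of trees is a pair of maps into the
  factors, so \<open>hom(X, A \<times> B) = hom(X, A) hom(X, B)\<close>; and \<open>hom(X, A) > 0\<close> whenever the height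
  of \<open>X\<close> is at most \<open>depth(A)\<close>, since \<open>X\<close> folds onto the path from a deepest vertex of
  \<open>A\<close> to the root. Thus \<open>A B \<cong> A C\<close> forces \<open>hom(X, [B]\<^sub>d) = hom(X, [C]\<^sub>d)\<close> for
  \<open>d = depth(A)\<close> and all \<open>X\<close> (both sides vanish when \<open>X\<close> is higher than \<open>d\<close>). Finally,
  \<open>hom(-, T)\<close> determines \<open>T\<close>: for each subtree \<open>c\<close> at the root of \<open>T\<close>, \<open>X \<mapsto> hom(X, c)\<close>
  is multiplicative with respect to gluing two trees at their roots, so by the linear
  independence of characters the multiset of these subtrees is recovered, and one
  concludes by induction on the height.\<close>

definition children :: "('a \<times> 'a) set \<Rightarrow> 'a \<Rightarrow> 'a set" where
  "children E v = {u. (u, v) \<in> E}"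

locale rooted_tree =
  fixes V :: "'a set" and E :: "('a \<times> 'a) set" and r :: 'a
  assumes arcs_subset: "E \<subseteq> V \<times> V"
    and root_in_V: "r \<in> V"
    and root_no_parent: "(r, y) \<notin> E"
    and unique_parent: "v \<in> V \<Longrightarrow> v \<noteq> r \<Longrightarrow> \<exists>!w. (v, w) \<in> E"
    and reaches_root: "v \<in> V \<Longrightarrow> (v, r) \<in> E\<^sup>*"
    and finite_children: "finite (children E v)"
begin

lemma child_in_V: "(u, v) \<in> E \<Longrightarrow> u \<in> V"
  using arcs_subset by auto

lemma parent_in_V: "(u, v) \<in> E \<Longrightarrow> v \<in> V"
  using arcs_subset by auto

lemma parent_functional: "(u, x) \<in> E \<Longrightarrow> (u, y) \<in> E \<Longrightarrow> x = y"
  using unique_parent child_in_V root_no_parent by blast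

lemma relpow_functional: "(u, x) \<in> E ^^ n \<Longrightarrow> (u, y) \<in> E ^^ n \<Longrightarrow> x = y"
proof (induction n arbitrary: u)
  case (Suc n)
  obtain a b where "(u, a) \<in> E" "(a, x) \<in> E ^^ n" "(u, b) \<in> E" "(b, y) \<in> E ^^ n"
    using Suc.prems by (meson relpow_Suc_D2)
  then show ?case
    using Suc.IH parent_functional by blast
qed simp

lemma relpow_from_root: "(r, x) \<in> E ^^ n \<Longrightarrow> n = 0"
  using root_no_parent by (metis relpow_Suc_D2 not0_implies_Suc)

lemma relpow_to_root_unique:
  assumes "(v, r) \<in> E ^^ m" and "(v, r) \<in> E ^^ n"
  shows "m = n"
proof -
  have "m = n" if m: "(v, r) \<in> E ^^ m" and n: "(v, r) \<in> E ^^ n" and "m \<le> n" for m n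
  proof -
    obtain k where n_eq: "n = m + k"
      using \<open>m \<le> n\<close> le_Suc_ex by blast
    then obtain z where "(v, z) \<in> E ^^ m" and z: "(z, r) \<in> E ^^ k"
      using n by (auto simp: relpow_add)
    then have "z = r"
      using m relpow_functional by blast
    then show ?thesis
      using n_eq z relpow_from_root by simp
  qed
  then show ?thesis
    using assms nat_le_linear by metis
qed

definition depth :: "'a \<Rightarrow> nat" where
  "depth v = (LEAST n. (v, r) \<in> E ^^ n)"

lemma depth_eqI: "(v, r) \<in> E ^^ n \<Longrightarrow> depth v = n"
  unfolding depth_def by (rule Least_equality) (auto dest: relpow_to_root_unique)

lemma relpow_depth: "v \<in> V \<Longrightarrow> (v, r) \<in> E ^^ depth v"
  using reaches_root depth_eqI by (metis rtrancl_power)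

lemma depth_relpow: "(u, v) \<in> E ^^ j \<Longrightarrow> v \<in> V \<Longrightarrow> depth u = j + depth v"
  by (rule depth_eqI) (auto simp: relpow_add relpow_depth)

lemma depth_arc: "(u, v) \<in> E \<Longrightarrow> depth u = Suc (depth v)"
  using depth_relpow[of u v 1] parent_in_V by auto

lemma depth_root: "depth r = 0"
  using depth_eqI[of r 0] by simp

lemma depth_eq_0_iff: "v \<in> V \<Longrightarrow> depth v = 0 \<longleftrightarrow> v = r"
  using relpow_depth depth_root by fastforce

lemma no_loop: "(v, v) \<notin> E"
  using depth_arc by fastforce

end

lemma rtrancl_to_root_if_connected:
  assumes arcs: "E \<subseteq> V \<times> V" and root: "\<forall>y. (r, y) \<notin> E"
    and parent: "\<forall>v\<in>V - {r}. \<exists>!w. (v, w) \<in> E"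
    and "(r, v) \<in> (E \<union> E\<inverse>)\<^sup>*"
  shows "(v, r) \<in> E\<^sup>*"
  using \<open>(r, v) \<in> (E \<union> E\<inverse>)\<^sup>*\<close>
proof (induction rule: rtrancl_induct)
  case (step y z)
  show ?case
  proof (cases "(z, y) \<in> E")
    case True
    then show ?thesis
      using step.IH by (meson converse_rtrancl_into_rtrancl)
  next
    case False
    then have yz: "(y, z) \<in> E"
      using step.hyps(2) by auto
    then have "y \<noteq> r" and "y \<in> V"
      using root arcs by auto
    then obtain w where "(y, w) \<in> E" "(w, r) \<in> E\<^sup>*"
      using step.IH by (metis converse_rtranclE)
    moreover have "w = z"
      using parent yz \<open>y \<noteq> r\<close> \<open>y \<in> V\<close> calculation(1) by blast
    ultimately show ?thesis
      by simp
  qed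
qed simp

lemma is_tree_arcs_subset: "is_tree T \<Longrightarrow> snd T \<subseteq> fst T \<times> fst T"
  by (simp add: is_tree_def Let_def)

lemma rooted_tree_if_is_tree:
  assumes "is_tree T" and "fst T \<noteq> {}"
  shows "rooted_tree (fst T) (snd T) (tree_root T)"
proof -
  obtain r where r: "r \<in> fst T" "\<forall>y. (r, y) \<notin> snd T" "\<forall>v\<in>fst T - {r}. \<exists>!w. (v, w) \<in> snd T"
    using assms by (auto simp: is_tree_def Let_def)
  have "tree_root T = r"
    unfolding tree_root_def using r by (intro the_equality) auto
  moreover have "(v, r) \<in> (snd T)\<^sup>*" if "v \<in> fst T" for v
    using rtrancl_to_root_if_connected[OF is_tree_arcs_subset[OF assms(1)] r(2,3)] assms(1) r(1) that
    by (auto simp: is_tree_def Let_def)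
  moreover have "finite (children (snd T) v)" for v
  proof (cases "v \<in> fst T")
    case False
    then have "children (snd T) v = {}"
      using is_tree_arcs_subset[OF assms(1)] by (auto simp: children_def)
    then show ?thesis
      by simp
  qed (use assms(1) in \<open>auto simp: is_tree_def Let_def children_def\<close>)
  ultimately show ?thesis
    using r is_tree_arcs_subset[OF assms(1)] by unfold_locales auto
qed

lemma vdepth_eq_depth:
  "is_tree T \<Longrightarrow> fst T \<noteq> {} \<Longrightarrow> vdepth T = rooted_tree.depth (snd T) (tree_root T)"
  by (simp add: vdepth_def rooted_tree.depth_def[OF rooted_tree_if_is_tree] fun_eq_iff)

lemma is_tree_finite_children:
  assumes "is_tree T"
  shows "finite (children (snd T) v)"
proof (cases "fst T = {}")
  case True
  then have "children (snd T) v = {}"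
    using is_tree_arcs_subset[OF assms] by (auto simp: children_def)
  then show ?thesis
    by simp
next
  case False
  then show ?thesis
    using rooted_tree.finite_children[OF rooted_tree_if_is_tree[OF assms]] by blast
qed

lemma vdepth_arc:
  assumes "is_tree T" and "(u, v) \<in> snd T"
  shows "vdepth T u = Suc (vdepth T v)"
proof -
  have "fst T \<noteq> {}"
    using assms is_tree_arcs_subset by blast
  then show ?thesis
    using rooted_tree.depth_arc[OF rooted_tree_if_is_tree[OF assms(1) \<open>fst T \<noteq> {}\<close>] assms(2)]
      vdepth_eq_depth[OF assms(1)] by simp
qed

lemma relpow_vdepth:
  assumes "is_tree T" and "v \<in> fst T"
  shows "(v, tree_root T) \<in> snd T ^^ vdepth T v"
proof -
  have "fst T \<noteq> {}"
    using assms(2) by blast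
  then show ?thesis
    using rooted_tree.relpow_depth[OF rooted_tree_if_is_tree[OF assms(1) \<open>fst T \<noteq> {}\<close>] assms(2)]
      vdepth_eq_depth[OF assms(1)] by simp
qed

lemma vdepth_eq_0_iff:
  assumes "is_tree T" and "v \<in> fst T"
  shows "vdepth T v = 0 \<longleftrightarrow> v = tree_root T"
proof -
  have "fst T \<noteq> {}"
    using assms(2) by blast
  then show ?thesis
    using rooted_tree.depth_eq_0_iff[OF rooted_tree_if_is_tree[OF assms(1) \<open>fst T \<noteq> {}\<close>] assms(2)]
      vdepth_eq_depth[OF assms(1)] by simp
qed

lemma tree_root_in: "is_tree T \<Longrightarrow> fst T \<noteq> {} \<Longrightarrow> tree_root T \<in> fst T"
  using rooted_tree.root_in_V[OF rooted_tree_if_is_tree] .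

lemma tree_root_no_parent: "is_tree T \<Longrightarrow> fst T \<noteq> {} \<Longrightarrow> (tree_root T, y) \<notin> snd T"
  using rooted_tree.root_no_parent[OF rooted_tree_if_is_tree] .

definition descendants :: "('a \<times> 'a) set \<Rightarrow> 'a \<Rightarrow> nat \<Rightarrow> 'a set" where
  "descendants E v k = {u. \<exists>j\<le>k. (u, v) \<in> E ^^ j}"

lemma self_in_descendants: "v \<in> descendants E v k"
  by (auto simp: descendants_def)

lemma descendants_0: "descendants E v 0 = {v}"
  by (auto simp: descendants_def)

lemma descendants_Suc:
  "descendants E v (Suc k) = insert v (\<Union>c\<in>children E v. descendants E c k)"
proof (intro equalityI subsetI)
  fix u
  assume "u \<in> descendants E v (Suc k)"
  then obtain j where "j \<le> Suc k" "(u, v) \<in> E ^^ j"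
    by (auto simp: descendants_def)
  then show "u \<in> insert v (\<Union>c\<in>children E v. descendants E c k)"
    by (cases j) (auto simp: descendants_def children_def elim: relpow_Suc_E)
next
  fix u
  assume "u \<in> insert v (\<Union>c\<in>children E v. descendants E c k)"
  then show "u \<in> descendants E v (Suc k)"
    by (auto simp: descendants_def children_def intro: relpow_Suc_I exI[of _ 0])
qed

context rooted_tree
begin

lemma depth_le_descendant: "v \<in> V \<Longrightarrow> u \<in> descendants E v k \<Longrightarrow> depth v \<le> depth u"
  unfolding descendants_def using depth_relpow by fastforce

lemma descendants_subset:
  assumes "v \<in> V"
  shows "descendants E v k \<subseteq> V"
proof
  fix u
  assume "u \<in> descendants E v k"
  then obtain j where j: "(u, v) \<in> E ^^ j"
    by (auto simp: descendants_def)
  show "u \<in> V"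
  proof (cases j)
    case 0
    then show ?thesis
      using j assms by simp
  next
    case (Suc i)
    then obtain a where "(u, a) \<in> E"
      using j relpow_Suc_D2 by metis
    then show ?thesis
      by (rule child_in_V)
  qed
qed

lemma descendants_children_disjoint:
  assumes "c \<in> children E v" "c' \<in> children E v"
    and "u \<in> descendants E c k" "u \<in> descendants E c' k'"
  shows "c = c'"
proof -
  obtain j j' where j: "(u, c) \<in> E ^^ j" and j': "(u, c') \<in> E ^^ j'"
    using assms(3,4) by (auto simp: descendants_def)
  have "depth c = depth c'"
    using assms(1,2) depth_arc by (simp add: children_def)
  moreover have "c \<in> V" "c' \<in> V"
    using assms(1,2) child_in_V by (auto simp: children_def)
  then have "j + depth c = j' + depth c'"
    using depth_relpow[OF j] depth_relpow[OF j'] by simp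
  ultimately show ?thesis
    using j j' relpow_functional by simp
qed

lemma parent_notin_descendants: "c \<in> children E v \<Longrightarrow> v \<notin> descendants E c k"
  using depth_le_descendant depth_arc child_in_V by (fastforce simp: children_def)

lemma arc_in_descendants_Suc_iff:
  assumes "v \<in> V" and u: "u \<in> descendants E v (Suc k)" and u': "u' \<in> descendants E v (Suc k)"
  shows "(u, u') \<in> E \<longleftrightarrow> (u \<in> children E v \<and> u' = v)
    \<or> (\<exists>c\<in>children E v. u \<in> descendants E c k \<and> u' \<in> descendants E c k \<and> (u, u') \<in> E)"
proof
  assume arc: "(u, u') \<in> E"
  have "u \<noteq> v"
    using depth_le_descendant[OF \<open>v \<in> V\<close> u'] depth_arc[OF arc] by auto
  then obtain c where c: "c \<in> children E v" "u \<in> descendants E c k"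
    using u unfolding descendants_Suc by blast
  show "(u \<in> children E v \<and> u' = v)
    \<or> (\<exists>c\<in>children E v. u \<in> descendants E c k \<and> u' \<in> descendants E c k \<and> (u, u') \<in> E)"
  proof (cases "u' = v")
    case True
    then show ?thesis
      using arc by (simp add: children_def)
  next
    case False
    then obtain c' where c': "c' \<in> children E v" "u' \<in> descendants E c' k"
      using u' unfolding descendants_Suc by blast
    then have "u \<in> descendants E c' (Suc k)"
      using arc by (auto simp: descendants_def intro: relpow_Suc_I2)
    then have "c = c'"
      using descendants_children_disjoint c c' by blast
    then show ?thesis
      using c c' arc by blast
  qed
qed (auto simp: children_def)

end

lemma characters_linearly_independent:
  fixes S :: "('x \<Rightarrow> 'b::idom) set"
  assumes "finite S"
    and "\<And>f. f \<in> S \<Longrightarrow> f e = 1"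
    and "\<And>f x y. f \<in> S \<Longrightarrow> f (mul x y) = f x * f y"
    and "\<And>x. (\<Sum>f\<in>S. c f * f x) = 0"
  shows "\<forall>f\<in>S. c f = 0"
  using assms
proof (induction S arbitrary: c rule: finite_induct)
  case (insert f1 S)
  have sum: "(\<Sum>f\<in>S. c f * f x) = - (c f1 * f1 x)" for x
    using insert.prems(3)[of x] insert.hyps by (simp add: add_eq_0_iff)
  have "\<forall>f\<in>S. c f * (f y - f1 y) = 0" for y
  proof (rule insert.IH)
    fix x
    have "(\<Sum>f\<in>S. c f * f (mul y x)) = (\<Sum>f\<in>S. c f * f y * f x)"
      using insert.prems(2) by (intro sum.cong) (auto simp: mult.assoc)
    then have "(\<Sum>f\<in>S. c f * (f y - f1 y) * f x)
        = (\<Sum>f\<in>S. c f * f (mul y x)) - f1 y * (\<Sum>f\<in>S. c f * f x)"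
      by (simp add: algebra_simps sum_subtractf sum_distrib_left)
    also have "\<dots> = 0"
      unfolding sum using insert.prems(2)[of f1 y x] by (simp add: algebra_simps)
    finally show "(\<Sum>f\<in>S. c f * (f y - f1 y) * f x) = 0" .
  qed (use insert.prems in auto)
  then have "\<forall>f\<in>S. c f = 0"
  proof (intro ballI)
    fix f
    assume "f \<in> S"
    then have "f \<noteq> f1"
      using insert.hyps by auto
    then obtain y where "f y \<noteq> f1 y"
      by (meson ext)
    then show "c f = 0"
      using \<open>f \<in> S\<close> \<open>\<forall>f\<in>S. c f * (f y - f1 y) = 0\<close> by auto
  qed
  moreover have "c f1 = 0"
    using sum[of e] insert.prems(1)[of f1] calculation by simp
  ultimately show ?case
    by simp
qed simp

lemma sum_mset_eq_sum_count:
  fixes f :: "'a \<Rightarrow> 'b::comm_semiring_1"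
  assumes "finite A" and "set_mset M \<subseteq> A"
  shows "(\<Sum>x\<in>#M. f x) = (\<Sum>x\<in>A. of_nat (count M x) * f x)"
  using assms(2)
proof (induction M)
  case (add y M)
  have "(\<Sum>x\<in>A. of_nat (count (add_mset y M) x) * f x)
      = (\<Sum>x\<in>A. of_nat (count M x) * f x + (if x = y then f x else 0))"
    by (intro sum.cong) (auto simp: algebra_simps)
  also have "\<dots> = (\<Sum>x\<in>A. of_nat (count M x) * f x) + f y"
    using add.prems assms(1) by (simp add: sum.distrib)
  finally show ?case
    using add by (simp add: add.commute)
qed simp

lemma multiset_of_characters_eqI:
  fixes P Q :: "('x \<Rightarrow> 'b::{idom,ring_char_0}) multiset"
  assumes "\<And>f. f \<in># P + Q \<Longrightarrow> f e = 1"
    and "\<And>f x y. f \<in># P + Q \<Longrightarrow> f (mul x y) = f x * f y"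
    and sums: "\<And>x. (\<Sum>f\<in>#P. f x) = (\<Sum>f\<in>#Q. f x)"
  shows "P = Q"
proof (rule multiset_eqI)
  let ?S = "set_mset (P + Q)"
  have "\<forall>f\<in>?S. of_nat (count P f) - of_nat (count Q f) = (0::'b)"
  proof (rule characters_linearly_independent[where e = e and mul = mul])
    show "(\<Sum>f\<in>?S. (of_nat (count P f) - of_nat (count Q f)) * f x) = 0" for x
      using sums[of x] sum_mset_eq_sum_count[of ?S P "\<lambda>f. f x"]
        sum_mset_eq_sum_count[of ?S Q "\<lambda>f. f x"]
      by (simp add: algebra_simps sum_subtractf)
  qed (use assms in auto)
  then show "count P f = count Q f" for f
    by (cases "f \<in> ?S") (auto simp: not_in_iff)
qed

datatype rtree = Node (subtrees: "rtree multiset")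

text \<open>\<^term>\<open>homs x t\<close> counts the maps from the vertices of \<^term>\<open>x\<close> to those of
  \<^term>\<open>t\<close> that send the root to the root and children to children.\<close>

primrec homs :: "rtree \<Rightarrow> rtree \<Rightarrow> nat" where
  "homs (Node M) = (\<lambda>t. \<Prod>h\<in>#image_mset homs M. \<Sum>c\<in>#subtrees t. h c)"

lemma homs_Node [simp]: "homs (Node M) t = (\<Prod>y\<in>#M. \<Sum>c\<in>#subtrees t. homs y c)"
  by (simp add: image_mset.compositionality comp_def)

declare homs.simps [simp del]

lemma homs_Node_eq_0_iff: "homs (Node M) t = 0 \<longleftrightarrow> (\<exists>y\<in>#M. \<forall>c\<in>#subtrees t. homs y c = 0)"
  by (auto simp: image_iff eq_commute[of 0])

lemma homs_leaf: "homs (Node {#}) t = 1"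
  by simp

lemma homs_join: "homs (Node (subtrees x + subtrees y)) t = homs x t * homs y t"
  by (cases x; cases y) simp

primrec height :: "rtree \<Rightarrow> nat" where
  "height (Node M) = Max (insert 0 (Suc ` set_mset (image_mset height M)))"

lemma height_Node_le_iff [simp]: "height (Node M) \<le> k \<longleftrightarrow> (\<forall>y\<in>#M. height y < k)"
  by auto

lemma height_subtree_less: "y \<in># M \<Longrightarrow> height y < height (Node M)"
  using height_Node_le_iff by (metis less_not_refl2 order_refl)

lemma height_Node_attained: "0 < height (Node M) \<Longrightarrow> \<exists>y\<in>#M. height (Node M) = Suc (height y)"
proof -
  assume "0 < height (Node M)"
  moreover have "Max (insert 0 (Suc ` height ` set_mset M)) \<in> insert 0 (Suc ` height ` set_mset M)"
    by (intro Max_in) auto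
  ultimately show ?thesis
    by auto
qed

declare height.simps [simp del]

lemma height_Node_eq_0_iff [simp]: "height (Node M) = 0 \<longleftrightarrow> M = {#}"
  unfolding le_zero_eq[symmetric] height_Node_le_iff by auto

lemma homs_eq_0_if_height_less: "height t < height x \<Longrightarrow> homs x t = 0"
proof (induction x arbitrary: t)
  case (Node M)
  obtain y where y: "y \<in># M" "height (Node M) = Suc (height y)"
    using Node.prems height_Node_attained by (metis gr_zeroI not_less0)
  have "homs y c = 0" if "c \<in># subtrees t" for c
  proof (rule Node.IH[OF y(1)])
    have "height c < height t"
      using height_subtree_less[OF that] by simp
    then show "height c < height y"
      using Node.prems y(2) by simp
  qed
  then show ?case
    using y(1) homs_Node_eq_0_iff by blast
qed

lemma rtree_eqI_homs: "(\<And>x. homs x s = homs x t) \<Longrightarrow> s = t"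
proof (induction s arbitrary: t)
  case (Node M)
  obtain M' where t: "t = Node M'"
    by (cases t)
  define \<chi> where "\<chi> c = (\<lambda>x. int (homs x c))" for c
  \<comment> \<open>\<open>\<chi> c\<close> is a character for gluing trees at their roots, and summing it over the
    subtrees of \<open>s\<close> at \<open>x\<close> gives \<open>homs (Node {#x#}) s\<close>.\<close>
  have \<chi>_eq: "image_mset \<chi> M = image_mset \<chi> M'"
  proof (rule multiset_of_characters_eqI[where e = "Node {#}"
        and mul = "\<lambda>x y. Node (subtrees x + subtrees y)"])
    have \<chi>_sum: "(\<Sum>f\<in>#image_mset \<chi> N. f x) = int (\<Sum>c\<in>#N. homs x c)" for N x
      by (simp add: \<chi>_def image_mset.compositionality comp_def)
    show "(\<Sum>f\<in>#image_mset \<chi> M. f x) = (\<Sum>f\<in>#image_mset \<chi> M'. f x)" for x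
      unfolding \<chi>_sum using Node.prems[of "Node {#x#}"] by (simp add: t del: of_nat_sum_mset)
  qed (auto simp: \<chi>_def homs_join homs_leaf simp del: homs_Node)
  have \<chi>_inj: "c = c'" if "c \<in># M" "\<chi> c = \<chi> c'" for c c'
    using Node.IH[OF that(1)] that(2) by (simp add: \<chi>_def fun_eq_iff)
  have "set_mset M' \<subseteq> set_mset M"
  proof
    fix c'
    assume "c' \<in># M'"
    then have "\<chi> c' \<in># image_mset \<chi> M"
      unfolding \<chi>_eq by simp
    then obtain c where "c \<in># M" "\<chi> c = \<chi> c'"
      by auto
    then show "c' \<in># M"
      using \<chi>_inj by blast
  qed
  then have "inj_on \<chi> (set_mset M \<union> set_mset M')"
    using \<chi>_inj by (auto intro!: inj_onI)
  then have "M = M'"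
    using image_mset_eq_image_mset_plusD[of \<chi> M M' "{#}"] \<chi>_eq by auto
  then show ?case
    using t by simp
qed

fun subtree_shape :: "('a \<times> 'a) set \<Rightarrow> nat \<Rightarrow> 'a \<Rightarrow> rtree" where
  "subtree_shape E 0 v = Node {#}"
| "subtree_shape E (Suc k) v = Node (image_mset (subtree_shape E k) (mset_set (children E v)))"

lemma height_subtree_shape: "height (subtree_shape E k v) \<le> k"
proof (induction k arbitrary: v)
  case (Suc k)
  then show ?case
    unfolding subtree_shape.simps height_Node_le_iff by (auto simp: less_Suc_eq_le)
qed simp

lemma homs_subtree_shape_pos:
  assumes "\<And>v. finite (children E v)"
  shows "(w, v) \<in> E ^^ j \<Longrightarrow> height x \<le> j \<Longrightarrow> height x \<le> k
    \<Longrightarrow> 0 < homs x (subtree_shape E k v)"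
proof (induction k arbitrary: x v w j)
  case 0
  obtain M where x: "x = Node M"
    by (cases x)
  then have "M = {#}"
    using "0.prems"(3) by auto
  then show ?case
    using x by simp
next
  case (Suc k)
  obtain M where x: "x = Node M"
    by (cases x)
  have "\<exists>c'\<in>#subtrees (subtree_shape E (Suc k) v). 0 < homs y c'" if y: "y \<in># M" for y
  proof -
    have "height y < height x"
      using x height_subtree_less[OF y] by simp
    then obtain j' where j: "j = Suc j'"
      using Suc.prems(2) by (cases j) auto
    then obtain c where c: "(w, c) \<in> E ^^ j'" "(c, v) \<in> E"
      using Suc.prems(1) by (auto elim: relpow_Suc_E)
    have "0 < homs y (subtree_shape E k c)"
      using Suc.IH[OF c(1)] \<open>height y < height x\<close> Suc.prems(2,3) j by simp
    moreover have "subtree_shape E k c \<in># subtrees (subtree_shape E (Suc k) v)"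
      using c(2) assms by (simp add: children_def)
    ultimately show ?thesis
      by blast
  qed
  then have "homs x (subtree_shape E (Suc k) v) \<noteq> 0"
    unfolding x homs_Node_eq_0_iff by fastforce
  then show ?case
    by simp
qed

definition iso_on ::
  "('a \<times> 'a) set \<Rightarrow> ('b \<times> 'b) set \<Rightarrow> ('a \<Rightarrow> 'b) \<Rightarrow> 'a set \<Rightarrow> 'b set \<Rightarrow> bool" where
  "iso_on E E' f X Y \<longleftrightarrow> bij_betw f X Y \<and> (\<forall>u\<in>X. \<forall>v\<in>X. (u, v) \<in> E \<longleftrightarrow> (f u, f v) \<in> E')"

lemma dg_iso_iff_iso_on: "dg_iso G H \<longleftrightarrow> (\<exists>f. iso_on (snd G) (snd H) f (fst G) (fst H))"
  by (simp add: dg_iso_def iso_on_def)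

lemma dg_iso_induced_if_iso_on:
  assumes "iso_on E E' f X Y"
  shows "dg_iso (X, E \<inter> X \<times> X) (Y, E' \<inter> Y \<times> Y)"
  unfolding dg_iso_def fst_conv snd_conv
proof (intro exI[of _ f] conjI ballI)
  show bij: "bij_betw f X Y"
    using assms by (simp add: iso_on_def)
  fix u v
  assume "u \<in> X" "v \<in> X"
  moreover have "f u \<in> Y" "f v \<in> Y"
    using bij_betw_apply[OF bij \<open>u \<in> X\<close>] bij_betw_apply[OF bij \<open>v \<in> X\<close>] .
  ultimately show "(u, v) \<in> E \<inter> X \<times> X \<longleftrightarrow> (f u, f v) \<in> E' \<inter> Y \<times> Y"
    using assms by (simp add: iso_on_def)
qed

lemma children_iso_on:
  assumes "iso_on E E' f X Y" "E \<subseteq> X \<times> X" "E' \<subseteq> Y \<times> Y" "v \<in> X"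
  shows "children E' (f v) = f ` children E v"
proof
  show "children E' (f v) \<subseteq> f ` children E v"
  proof
    fix u'
    assume "u' \<in> children E' (f v)"
    then have u': "(u', f v) \<in> E'" "u' \<in> Y"
      using assms(3) by (auto simp: children_def)
    then obtain u where "u \<in> X" "u' = f u"
      using assms(1) unfolding iso_on_def bij_betw_def by blast
    then show "u' \<in> f ` children E v"
      using assms(1,4) u'(1) by (auto simp: iso_on_def children_def)
  qed
  show "f ` children E v \<subseteq> children E' (f v)"
    using assms by (auto simp: iso_on_def children_def)
qed

lemma subtree_shape_iso_on:
  assumes "iso_on E E' f X Y" "E \<subseteq> X \<times> X" "E' \<subseteq> Y \<times> Y"
  shows "v \<in> X \<Longrightarrow> subtree_shape E k v = subtree_shape E' k (f v)"
proof (induction k arbitrary: v)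
  case (Suc k)
  have sub: "children E v \<subseteq> X"
    using assms(2) by (auto simp: children_def)
  then have "inj_on f (children E v)"
    using assms(1) by (meson bij_betw_def inj_on_subset iso_on_def)
  then have "image_mset (subtree_shape E' k) (mset_set (children E' (f v)))
      = image_mset (subtree_shape E' k \<circ> f) (mset_set (children E v))"
    using children_iso_on[OF assms Suc.prems]
    by (simp add: image_mset_mset_set[symmetric] image_mset.compositionality)
  also have "\<dots> = image_mset (subtree_shape E k) (mset_set (children E v))"
  proof (rule image_mset_cong)
    fix c
    assume "c \<in># mset_set (children E v)"
    then have "c \<in> children E v"
      by (cases "finite (children E v)") auto
    then show "(subtree_shape E' k \<circ> f) c = subtree_shape E k c"
      using Suc.IH sub by auto
  qed
  finally show ?case
    by simp
qed simp

lemma tprod_arcs_subset: "snd (tprod A B) \<subseteq> fst (tprod A B) \<times> fst (tprod A B)"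
  by (auto simp: tprod_def Let_def)

lemma children_tprod:
  assumes "is_tree A" "is_tree B" "(a, b) \<in> fst (tprod A B)"
  shows "children (snd (tprod A B)) (a, b) = children (snd A) a \<times> children (snd B) b"
proof (intro equalityI subsetI)
  fix p
  assume "p \<in> children (snd (tprod A B)) (a, b)"
  moreover obtain a' b' where "p = (a', b')"
    by fastforce
  ultimately show "p \<in> children (snd A) a \<times> children (snd B) b"
    by (simp add: children_def tprod_def Let_def)
next
  fix p
  assume "p \<in> children (snd A) a \<times> children (snd B) b"
  then obtain a' b' where p: "p = (a', b')" and arcs: "(a', a) \<in> snd A" "(b', b) \<in> snd B"
    by (auto simp: children_def)
  have "vdepth A a = vdepth B b"
    using assms(3) by (simp add: tprod_def Let_def)
  then have "vdepth A a' = vdepth B b'"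
    using vdepth_arc[OF assms(1) arcs(1)] vdepth_arc[OF assms(2) arcs(2)] by simp
  moreover have "a' \<in> fst A" "b' \<in> fst B"
    using arcs is_tree_arcs_subset[OF assms(1)] is_tree_arcs_subset[OF assms(2)] by auto
  ultimately have "(a', b') \<in> fst (tprod A B)"
    unfolding tprod_def Let_def by simp
  then show "p \<in> children (snd (tprod A B)) (a, b)"
    using assms(3) arcs p unfolding children_def tprod_def Let_def by simp
qed

lemma homs_subtree_shape_tprod:
  assumes "is_tree A" "is_tree B"
  shows "(a, b) \<in> fst (tprod A B) \<Longrightarrow> homs x (subtree_shape (snd (tprod A B)) k (a, b))
    = homs x (subtree_shape (snd A) k a) * homs x (subtree_shape (snd B) k b)"
proof (induction k arbitrary: x a b)
  case 0
  obtain M where "x = Node M"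
    by (cases x)
  then show ?case
    by (cases "M = {#}") (auto simp: homs_Node_eq_0_iff homs_leaf simp del: homs_Node)
next
  case (Suc k)
  let ?AB = "snd (tprod A B)"
  have children: "children ?AB (a, b) = children (snd A) a \<times> children (snd B) b"
    using children_tprod[OF assms Suc.prems] .
  have "(\<Sum>c\<in>#subtrees (subtree_shape ?AB (Suc k) (a, b)). homs y c)
     = (\<Sum>c\<in>#subtrees (subtree_shape (snd A) (Suc k) a). homs y c) *
       (\<Sum>c\<in>#subtrees (subtree_shape (snd B) (Suc k) b). homs y c)" for y
  proof -
    have "(\<Sum>c\<in>#subtrees (subtree_shape ?AB (Suc k) (a, b)). homs y c)
        = (\<Sum>p\<in>children ?AB (a, b). homs y (subtree_shape ?AB k p))"
      by (simp add: sum_unfold_sum_mset image_mset.compositionality comp_def)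
    also have "\<dots> = (\<Sum>(a', b')\<in>children (snd A) a \<times> children (snd B) b.
        homs y (subtree_shape (snd A) k a') * homs y (subtree_shape (snd B) k b'))"
      unfolding children
    proof (intro sum.cong refl)
      fix p
      assume p: "p \<in> children (snd A) a \<times> children (snd B) b"
      then have "p \<in> fst (tprod A B)"
        using children tprod_arcs_subset[of A B] by (auto simp: children_def)
      then show "homs y (subtree_shape ?AB k p)
          = (case p of (a', b') \<Rightarrow> homs y (subtree_shape (snd A) k a') * homs y (subtree_shape (snd B) k b'))"
        using Suc.IH by (cases p) simp
    qed
    also have "\<dots> = (\<Sum>a'\<in>children (snd A) a. homs y (subtree_shape (snd A) k a'))
        * (\<Sum>b'\<in>children (snd B) b. homs y (subtree_shape (snd B) k b'))"
      by (simp add: sum_product sum.cartesian_product)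
    finally show ?thesis
      by (simp add: sum_unfold_sum_mset image_mset.compositionality comp_def)
  qed
  then show ?case
    by (cases x) (simp add: prod_mset.distrib)
qed

lemma bij_betw_if_image_mset_eq:
  assumes "finite S" and "finite T"
    and "image_mset f (mset_set S) = image_mset g (mset_set T)"
  shows "\<exists>h. bij_betw h S T \<and> (\<forall>x\<in>S. g (h x) = f x)"
  using assms
proof (induction S arbitrary: T rule: finite_induct)
  case empty
  then have "T = {}"
    by (simp add: mset_set_empty_iff)
  then show ?case
    by (auto simp: bij_betw_def)
next
  case (insert x S)
  have T: "image_mset g (mset_set T) = add_mset (f x) (image_mset f (mset_set S))"
    using insert.prems(2) insert.hyps by simp
  then have "f x \<in> g ` T"
    using insert.prems(1) by (metis finite_set_mset_mset_set set_image_mset union_single_eq_member)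
  then obtain y where y: "f x = g y" "y \<in> T"
    by (rule imageE)
  then have "image_mset f (mset_set S) = image_mset g (mset_set (T - {y}))"
    using T insert.prems(1) by (simp add: mset_set.remove)
  then obtain h where h: "bij_betw h S (T - {y})" "\<forall>z\<in>S. g (h z) = f z"
    using insert.IH insert.prems(1) by blast
  define h' where "h' = h(x := y)"
  have "\<forall>z\<in>S. h' z = h z"
    using insert.hyps(2) by (auto simp: h'_def)
  then have "bij_betw h' S (T - {y})"
    using bij_betw_cong[of S h' h "T - {y}"] h(1) by simp
  then have "bij_betw h' (S \<union> {x}) ((T - {y}) \<union> {y})"
    using notIn_Un_bij_betw3[of x S h' "T - {y}"] insert.hyps(2) by (simp add: h'_def)
  then have "bij_betw h' (insert x S) T"
    using y(2) by (simp add: insert_absorb)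
  moreover have "\<forall>z\<in>insert x S. g (h' z) = f z"
    using h(2) y(1) insert.hyps(2) by (auto simp: h'_def)
  ultimately show ?case
    by blast
qed

locale subtree_isos = B: rooted_tree VB EB rB + C: rooted_tree VC EC rC
  for VB :: "'a set" and EB rB and VC :: "'b set" and EC rC +
  fixes v :: 'a and w :: 'b and k :: nat and g :: "'a \<Rightarrow> 'b" and \<Phi> :: "'a \<Rightarrow> 'a \<Rightarrow> 'b"
  assumes v_in_VB: "v \<in> VB"
    and w_in_VC: "w \<in> VC"
    and bij_children: "bij_betw g (children EB v) (children EC w)"
    and iso_below_children:
      "c \<in> children EB v \<Longrightarrow> iso_on EB EC (\<Phi> c) (descendants EB c k) (descendants EC (g c) k)"
    and child_to_child: "c \<in> children EB v \<Longrightarrow> \<Phi> c c = g c"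
begin

definition glued :: "'a \<Rightarrow> 'b" where
  "glued u = (if u = v then w else \<Phi> (THE c. c \<in> children EB v \<and> u \<in> descendants EB c k) u)"

lemma glued_v: "glued v = w"
  by (simp add: glued_def)

lemma glued_below_child:
  assumes "c \<in> children EB v" "u \<in> descendants EB c k"
  shows "glued u = \<Phi> c u"
proof -
  have "u \<noteq> v"
    using B.parent_notin_descendants assms by blast
  moreover have "(THE c. c \<in> children EB v \<and> u \<in> descendants EB c k) = c"
    using assms B.descendants_children_disjoint by blast
  ultimately show ?thesis
    by (simp add: glued_def)
qed

lemma g_in_children: "c \<in> children EB v \<Longrightarrow> g c \<in> children EC w"
  using bij_betw_apply[OF bij_children] .

lemma image_glued_below_child:
  assumes "c \<in> children EB v"
  shows "glued ` descendants EB c k = descendants EC (g c) k"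
proof -
  have "glued ` descendants EB c k = \<Phi> c ` descendants EB c k"
    using glued_below_child[OF assms] by (rule image_cong[OF refl])
  also have "\<dots> = descendants EC (g c) k"
    using iso_below_children[OF assms] by (simp add: iso_on_def bij_betw_def)
  finally show ?thesis .
qed

lemma glued_below_child_iff:
  assumes u: "u \<in> descendants EB v (Suc k)" and c: "c \<in> children EB v"
  shows "glued u \<in> descendants EC (g c) k \<longleftrightarrow> u \<in> descendants EB c k"
proof
  assume gu: "glued u \<in> descendants EC (g c) k"
  have "u \<noteq> v"
    using gu glued_v C.parent_notin_descendants[OF g_in_children[OF c]] by auto
  then obtain c' where c': "c' \<in> children EB v" "u \<in> descendants EB c' k"
    using u unfolding descendants_Suc by blast
  then have "glued u \<in> descendants EC (g c') k"
    using image_glued_below_child by blast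
  then have "g c = g c'"
    using gu C.descendants_children_disjoint g_in_children c c'(1) by blast
  then have "c = c'"
    using bij_children c c'(1) by (auto simp: bij_betw_def inj_on_def)
  then show "u \<in> descendants EB c k"
    using c' by simp
qed (use image_glued_below_child c in blast)

lemma glued_eq_w_iff:
  assumes u: "u \<in> descendants EB v (Suc k)"
  shows "glued u = w \<longleftrightarrow> u = v"
proof
  assume "glued u = w"
  show "u = v"
  proof (rule ccontr)
    assume "u \<noteq> v"
    then obtain c where c: "c \<in> children EB v" "u \<in> descendants EB c k"
      using u unfolding descendants_Suc by blast
    then have "w \<in> descendants EC (g c) k"
      using \<open>glued u = w\<close> glued_below_child_iff[OF u c(1)] by simp
    then show False
      using C.parent_notin_descendants g_in_children \<open>c \<in> children EB v\<close> by blast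
  qed
qed (simp add: glued_v)

lemma glued_child_iff:
  assumes u: "u \<in> descendants EB v (Suc k)"
  shows "glued u \<in> children EC w \<longleftrightarrow> u \<in> children EB v"
proof
  assume gu: "glued u \<in> children EC w"
  have "u \<noteq> v"
    using gu glued_v C.no_loop by (auto simp: children_def)
  then obtain c where c: "c \<in> children EB v" "u \<in> descendants EB c k"
    using u unfolding descendants_Suc by blast
  then have "glued u \<in> descendants EC (g c) k"
    using glued_below_child_iff u by blast
  then have "g c = glued u"
    using C.descendants_children_disjoint[OF g_in_children[OF c(1)] gu _ self_in_descendants] by blast
  then have "\<Phi> c u = \<Phi> c c"
    using glued_below_child[OF c] child_to_child[OF c(1)] by simp
  moreover have "inj_on (\<Phi> c) (descendants EB c k)"
    using iso_below_children[OF c(1)] by (simp add: iso_on_def bij_betw_def)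
  ultimately have "u = c"
    using c(2) self_in_descendants by (metis inj_onD)
  then show "u \<in> children EB v"
    using c(1) by simp
next
  assume "u \<in> children EB v"
  then show "glued u \<in> children EC w"
    using glued_below_child[OF _ self_in_descendants] child_to_child g_in_children by simp
qed

lemma image_glued: "glued ` descendants EB v (Suc k) = descendants EC w (Suc k)"
proof -
  have "glued ` descendants EB v (Suc k) = insert w (\<Union>c\<in>children EB v. glued ` descendants EB c k)"
    by (simp add: descendants_Suc image_UN glued_v)
  also have "\<dots> = insert w (\<Union>c\<in>children EB v. descendants EC (g c) k)"
    using image_glued_below_child by simp
  also have "\<dots> = descendants EC w (Suc k)"
  proof -
    have "children EC w = g ` children EB v"
      using bij_children by (simp add: bij_betw_def)
    then show ?thesis
      by (simp add: descendants_Suc)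
  qed
  finally show ?thesis .
qed

lemma inj_on_glued: "inj_on glued (descendants EB v (Suc k))"
proof (rule inj_onI)
  fix u1 u2
  assume u1: "u1 \<in> descendants EB v (Suc k)" and u2: "u2 \<in> descendants EB v (Suc k)"
    and eq: "glued u1 = glued u2"
  show "u1 = u2"
  proof (cases "u1 = v")
    case True
    then show ?thesis
      using eq glued_eq_w_iff[OF u2] glued_v by simp
  next
    case False
    then obtain c where c: "c \<in> children EB v" "u1 \<in> descendants EB c k"
      using u1 unfolding descendants_Suc by blast
    then have "u2 \<in> descendants EB c k"
      using eq glued_below_child_iff u1 u2 by metis
    moreover have "inj_on (\<Phi> c) (descendants EB c k)"
      using iso_below_children[OF c(1)] by (simp add: iso_on_def bij_betw_def)
    ultimately show ?thesis
      using c eq glued_below_child by (metis inj_onD)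
  qed
qed

lemma arc_glued_iff:
  assumes u: "u \<in> descendants EB v (Suc k)" and u': "u' \<in> descendants EB v (Suc k)"
  shows "(glued u, glued u') \<in> EC \<longleftrightarrow> (u, u') \<in> EB"
proof -
  have gu: "glued u \<in> descendants EC w (Suc k)" and gu': "glued u' \<in> descendants EC w (Suc k)"
    using u u' image_glued by blast+
  have children_w: "children EC w = g ` children EB v"
    using bij_children by (simp add: bij_betw_def)
  have "(u \<in> descendants EB c k \<and> u' \<in> descendants EB c k \<and> (u, u') \<in> EB)
      \<longleftrightarrow> (glued u \<in> descendants EC (g c) k \<and> glued u' \<in> descendants EC (g c) k
           \<and> (glued u, glued u') \<in> EC)" if c: "c \<in> children EB v" for c
    using glued_below_child_iff[OF u c] glued_below_child_iff[OF u' c] glued_below_child[OF c]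
      iso_below_children[OF c] by (auto simp: iso_on_def)
  then show ?thesis
    using B.arc_in_descendants_Suc_iff[OF v_in_VB u u'] C.arc_in_descendants_Suc_iff[OF w_in_VC gu gu']
      glued_child_iff[OF u] glued_eq_w_iff[OF u'] children_w by auto
qed

lemma iso_on_glued:
  "iso_on EB EC glued (descendants EB v (Suc k)) (descendants EC w (Suc k))"
  using inj_on_glued image_glued arc_glued_iff by (simp add: iso_on_def bij_betw_def)

end

lemma iso_on_descendants_if_subtree_shape_eq:
  assumes B: "rooted_tree VB EB rB" and C: "rooted_tree VC EC rC"
  shows "v \<in> VB \<Longrightarrow> w \<in> VC \<Longrightarrow> subtree_shape EB k v = subtree_shape EC k w \<Longrightarrow>
    \<exists>\<phi>. iso_on EB EC \<phi> (descendants EB v k) (descendants EC w k) \<and> \<phi> v = w"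
proof (induction k arbitrary: v w)
  case 0
  have "iso_on EB EC (\<lambda>_. w) {v} {w}"
    using rooted_tree.no_loop[OF B] rooted_tree.no_loop[OF C] by (simp add: iso_on_def)
  then show ?case
    by (auto simp: descendants_0)
next
  case (Suc k)
  have "image_mset (subtree_shape EB k) (mset_set (children EB v))
      = image_mset (subtree_shape EC k) (mset_set (children EC w))"
    using Suc.prems(3) by simp
  then obtain g where g: "bij_betw g (children EB v) (children EC w)"
    and shape_g: "\<forall>c\<in>children EB v. subtree_shape EC k (g c) = subtree_shape EB k c"
    using bij_betw_if_image_mset_eq[OF rooted_tree.finite_children[OF B]
        rooted_tree.finite_children[OF C]] by blast
  have "\<exists>\<phi>. iso_on EB EC \<phi> (descendants EB c k) (descendants EC (g c) k) \<and> \<phi> c = g c"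
    if c: "c \<in> children EB v" for c
  proof (rule Suc.IH)
    show "c \<in> VB"
      using c rooted_tree.child_in_V[OF B] by (simp add: children_def)
    show "g c \<in> VC"
      using bij_betw_apply[OF g c] rooted_tree.child_in_V[OF C] by (simp add: children_def)
    show "subtree_shape EB k c = subtree_shape EC k (g c)"
      using shape_g c by simp
  qed
  then obtain \<Phi> where \<Phi>: "\<And>c. c \<in> children EB v \<Longrightarrow>
      iso_on EB EC (\<Phi> c) (descendants EB c k) (descendants EC (g c) k) \<and> \<Phi> c c = g c"
    by metis
  have "subtree_isos VB EB rB VC EC rC v w k g \<Phi>"
    using \<Phi> by (intro subtree_isos.intro subtree_isos_axioms.intro B C Suc.prems(1,2) g) blast+
  then interpret subtree_isos VB EB rB VC EC rC v w k g \<Phi> .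
  show ?case
    using iso_on_glued glued_v by blast
qed

lemma tree_roots_in_tprod:
  assumes "is_tree A" "is_tree B" "fst A \<noteq> {}" "fst B \<noteq> {}"
  shows "(tree_root A, tree_root B) \<in> fst (tprod A B)"
proof -
  have roots: "tree_root A \<in> fst A" "tree_root B \<in> fst B"
    using tree_root_in[OF assms(1,3)] tree_root_in[OF assms(2,4)] .
  moreover have "vdepth A (tree_root A) = 0" "vdepth B (tree_root B) = 0"
    using vdepth_eq_0_iff[OF assms(1) roots(1)] vdepth_eq_0_iff[OF assms(2) roots(2)] by simp_all
  ultimately show ?thesis
    unfolding tprod_def Let_def by simp
qed

lemma tprod_eq_empty_iff:
  assumes "is_tree A" "is_tree B"
  shows "fst (tprod A B) = {} \<longleftrightarrow> fst A = {} \<or> fst B = {}"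
proof
  show "fst (tprod A B) = {} \<Longrightarrow> fst A = {} \<or> fst B = {}"
    using tree_roots_in_tprod[OF assms] by blast
  show "fst A = {} \<or> fst B = {} \<Longrightarrow> fst (tprod A B) = {}"
    unfolding tprod_def Let_def by auto
qed

lemma tprod_root_if_no_parent:
  assumes A: "is_tree A" and B: "is_tree B" and ab: "(a, b) \<in> fst (tprod A B)"
    and no_parent: "\<forall>p. ((a, b), p) \<notin> snd (tprod A B)"
  shows "a = tree_root A \<and> b = tree_root B"
proof -
  have a: "a \<in> fst A" and b: "b \<in> fst B" and depths: "vdepth A a = vdepth B b"
    using ab unfolding tprod_def Let_def by simp_all
  have "vdepth A a = 0"
  proof (rule ccontr)
    assume "vdepth A a \<noteq> 0"
    then have "a \<noteq> tree_root A" "b \<noteq> tree_root B"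
      using vdepth_eq_0_iff[OF A a] vdepth_eq_0_iff[OF B b] depths by auto
    moreover have "fst A \<noteq> {}" "fst B \<noteq> {}"
      using a b by blast+
    ultimately obtain a' b' where arcs: "(a, a') \<in> snd A" "(b, b') \<in> snd B"
      using rooted_tree.unique_parent[OF rooted_tree_if_is_tree[OF A] a]
        rooted_tree.unique_parent[OF rooted_tree_if_is_tree[OF B] b] by (meson ex1_implies_ex)
    then have "vdepth A a' = vdepth B b'"
      using vdepth_arc[OF A arcs(1)] vdepth_arc[OF B arcs(2)] depths by simp
    moreover have "a' \<in> fst A" "b' \<in> fst B"
      using arcs is_tree_arcs_subset[OF A] is_tree_arcs_subset[OF B] by auto
    ultimately have "((a, b), (a', b')) \<in> snd (tprod A B)"
      using ab arcs unfolding tprod_def Let_def by simp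
    then show False
      using no_parent by blast
  qed
  then show ?thesis
    using vdepth_eq_0_iff[OF A a] vdepth_eq_0_iff[OF B b] depths by auto
qed

lemma iso_on_no_parent:
  assumes iso: "iso_on E E' f X Y" and "E' \<subseteq> Y \<times> Y" "x \<in> X" "\<forall>y. (x, y) \<notin> E"
  shows "(f x, y) \<notin> E'"
proof
  assume arc: "(f x, y) \<in> E'"
  then have "y \<in> f ` X"
    using iso assms(2) by (auto simp: iso_on_def bij_betw_def)
  then obtain z where "y = f z" "z \<in> X"
    by (rule imageE)
  then show False
    using iso arc assms(3,4) by (auto simp: iso_on_def)
qed

lemma iso_on_tprod_roots:
  assumes A: "is_tree A" and B: "is_tree B" and C: "is_tree C"
    and nonempty: "fst A \<noteq> {}" "fst B \<noteq> {}" "fst C \<noteq> {}"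
    and iso: "iso_on (snd (tprod A B)) (snd (tprod A C)) f (fst (tprod A B)) (fst (tprod A C))"
  shows "f (tree_root A, tree_root B) = (tree_root A, tree_root C)"
proof -
  let ?r = "(tree_root A, tree_root B)"
  have r: "?r \<in> fst (tprod A B)"
    using tree_roots_in_tprod[OF A B nonempty(1,2)] .
  have "\<forall>p. (?r, p) \<notin> snd (tprod A B)"
    using tree_root_no_parent[OF A nonempty(1)] unfolding tprod_def Let_def by auto
  then have "\<forall>p. (f ?r, p) \<notin> snd (tprod A C)"
    using iso_on_no_parent[OF iso tprod_arcs_subset r] by blast
  moreover have "f ?r \<in> fst (tprod A C)"
    using iso bij_betw_apply[OF _ r] unfolding iso_on_def by blast
  ultimately show ?thesis
    using tprod_root_if_no_parent[OF A C] by (cases "f ?r") simp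
qed

lemma subtree_shape_tprod_cancel:
  assumes A: "is_tree A" and B: "is_tree B" and C: "is_tree C"
    and nonempty: "fst B \<noteq> {}" "fst C \<noteq> {}" and a: "a \<in> fst A"
    and shapes: "subtree_shape (snd (tprod A B)) (vdepth A a) (tree_root A, tree_root B)
      = subtree_shape (snd (tprod A C)) (vdepth A a) (tree_root A, tree_root C)"
  shows "subtree_shape (snd B) (vdepth A a) (tree_root B)
    = subtree_shape (snd C) (vdepth A a) (tree_root C)"
proof (rule rtree_eqI_homs)
  fix x
  let ?d = "vdepth A a"
  have "fst A \<noteq> {}"
    using a by blast
  then have prod_B: "homs x (subtree_shape (snd (tprod A B)) ?d (tree_root A, tree_root B))
      = homs x (subtree_shape (snd A) ?d (tree_root A)) * homs x (subtree_shape (snd B) ?d (tree_root B))"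
    and prod_C: "homs x (subtree_shape (snd (tprod A C)) ?d (tree_root A, tree_root C))
      = homs x (subtree_shape (snd A) ?d (tree_root A)) * homs x (subtree_shape (snd C) ?d (tree_root C))"
    using homs_subtree_shape_tprod[OF A B tree_roots_in_tprod[OF A B _ nonempty(1)]]
      homs_subtree_shape_tprod[OF A C tree_roots_in_tprod[OF A C _ nonempty(2)]] by simp_all
  show "homs x (subtree_shape (snd B) ?d (tree_root B)) = homs x (subtree_shape (snd C) ?d (tree_root C))"
  proof (cases "height x \<le> ?d")
    case True
    have "0 < homs x (subtree_shape (snd A) ?d (tree_root A))"
      using homs_subtree_shape_pos[OF is_tree_finite_children[OF A] relpow_vdepth[OF A a] True True] .
    moreover have "homs x (subtree_shape (snd A) ?d (tree_root A)) * homs x (subtree_shape (snd B) ?d (tree_root B))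
        = homs x (subtree_shape (snd A) ?d (tree_root A)) * homs x (subtree_shape (snd C) ?d (tree_root C))"
      by (simp only: prod_B[symmetric] prod_C[symmetric] shapes)
    ultimately show ?thesis
      by simp
  next
    case False
    then have "height (subtree_shape (snd B) ?d (tree_root B)) < height x"
      and "height (subtree_shape (snd C) ?d (tree_root C)) < height x"
      using height_subtree_shape[of "snd B" ?d "tree_root B"]
        height_subtree_shape[of "snd C" ?d "tree_root C"] by linarith+
    then show ?thesis
      using homs_eq_0_if_height_less by simp
  qed
qed

lemma trunc_eq_induced_descendants:
  assumes "is_tree T" and "fst T \<noteq> {}"
  shows "trunc T (int k) = (let X = descendants (snd T) (tree_root T) k in (X, snd T \<inter> X \<times> X))"
proof -
  interpret rooted_tree "fst T" "snd T" "tree_root T"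
    using rooted_tree_if_is_tree[OF assms] .
  have "{v \<in> fst T. int (vdepth T v) \<le> int k} = descendants (snd T) (tree_root T) k"
  proof (intro equalityI subsetI)
    fix v
    assume "v \<in> {v \<in> fst T. int (vdepth T v) \<le> int k}"
    then have "v \<in> fst T" "vdepth T v \<le> k"
      by simp_all
    then show "v \<in> descendants (snd T) (tree_root T) k"
      using relpow_vdepth[OF assms(1)] unfolding descendants_def by blast
  next
    fix u
    assume u: "u \<in> descendants (snd T) (tree_root T) k"
    then obtain j where "j \<le> k" "(u, tree_root T) \<in> snd T ^^ j"
      unfolding descendants_def by blast
    moreover have "u \<in> fst T"
      using descendants_subset[OF root_in_V] u by blast
    ultimately show "u \<in> {v \<in> fst T. int (vdepth T v) \<le> int k}"
      using depth_relpow[OF _ root_in_V] depth_root vdepth_eq_depth[OF assms] by simp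
  qed
  then show ?thesis
    unfolding trunc_def Let_def by simp
qed

lemma fst_trunc_eq_empty: "fst T = {} \<or> k < 0 \<Longrightarrow> fst (trunc T k) = {}"
  unfolding trunc_def Let_def by auto

lemma dg_iso_empty: "fst G = {} \<Longrightarrow> fst H = {} \<Longrightarrow> dg_iso G H"
  unfolding dg_iso_def by (auto simp: bij_betw_def)

lemma dg_iso_fst_empty_iff: "dg_iso G H \<Longrightarrow> fst G = {} \<longleftrightarrow> fst H = {}"
  unfolding dg_iso_def bij_betw_def by force

lemma fin_depth_attained:
  assumes "finite (fst A)" and "fst A \<noteq> {}"
  obtains a where "a \<in> fst A" and "fin_depth A = int (vdepth A a)"
proof -
  have "Max (vdepth A ` fst A) \<in> vdepth A ` fst A"
    using assms by (intro Max_in) simp_all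
  then obtain a where "Max (vdepth A ` fst A) = vdepth A a" "a \<in> fst A"
    by (rule imageE)
  then show ?thesis
    using that assms(2) by (simp add: fin_depth_def)
qed

lemma subtree_shape_tprod_roots_eq_if_dg_iso:
  assumes A: "is_tree A" and B: "is_tree B" and C: "is_tree C"
    and nonempty: "fst A \<noteq> {}" "fst B \<noteq> {}" "fst C \<noteq> {}"
    and "dg_iso (tprod A B) (tprod A C)"
  shows "subtree_shape (snd (tprod A B)) k (tree_root A, tree_root B)
    = subtree_shape (snd (tprod A C)) k (tree_root A, tree_root C)"
proof -
  obtain f where f: "iso_on (snd (tprod A B)) (snd (tprod A C)) f (fst (tprod A B)) (fst (tprod A C))"
    using assms(7) dg_iso_iff_iso_on by blast
  show ?thesis
    using subtree_shape_iso_on[OF f tprod_arcs_subset tprod_arcs_subset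
        tree_roots_in_tprod[OF A B nonempty(1,2)]]
      iso_on_tprod_roots[OF A B C nonempty f] by simp
qed

lemma dg_iso_trunc_if_subtree_shape_eq:
  assumes B: "is_tree B" and C: "is_tree C" and nonempty: "fst B \<noteq> {}" "fst C \<noteq> {}"
    and "subtree_shape (snd B) k (tree_root B) = subtree_shape (snd C) k (tree_root C)"
  shows "dg_iso (trunc B (int k)) (trunc C (int k))"
proof -
  obtain \<phi> where "iso_on (snd B) (snd C) \<phi>
      (descendants (snd B) (tree_root B) k) (descendants (snd C) (tree_root C) k)"
    using iso_on_descendants_if_subtree_shape_eq[OF
        rooted_tree_if_is_tree[OF B nonempty(1)] rooted_tree_if_is_tree[OF C nonempty(2)]
        tree_root_in[OF B nonempty(1)] tree_root_in[OF C nonempty(2)] assms(5)] by metis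
  then show ?thesis
    unfolding trunc_eq_induced_descendants[OF B nonempty(1)]
      trunc_eq_induced_descendants[OF C nonempty(2)] Let_def
    by (rule dg_iso_induced_if_iso_on)
qed

theorem mainTheorem10:
  fixes A :: "'a digraph" and B :: "'b digraph" and C :: "'c digraph"
  assumes "is_tree A" and "is_tree B" and "is_tree C"
    and "finite (fst A)"
    and "dg_iso (tprod A B) (tprod A C)"
  shows "dg_iso (trunc B (fin_depth A)) (trunc C (fin_depth A))"
proof (cases "fst A = {} \<or> fst B = {} \<or> fst C = {}")
  case True
  have "fst A = {} \<or> fst B = {} \<longleftrightarrow> fst A = {} \<or> fst C = {}"
    using dg_iso_fst_empty_iff[OF assms(5)] tprod_eq_empty_iff[OF assms(1,2)]
      tprod_eq_empty_iff[OF assms(1,3)] by simp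
  then have "fst B = {} \<or> fin_depth A < 0" and "fst C = {} \<or> fin_depth A < 0"
    using True by (auto simp: fin_depth_def)
  then show ?thesis
    by (intro dg_iso_empty fst_trunc_eq_empty)
next
  case False
  then have nonempty: "fst A \<noteq> {}" "fst B \<noteq> {}" "fst C \<noteq> {}"
    by simp_all
  obtain a where a: "a \<in> fst A" "fin_depth A = int (vdepth A a)"
    using fin_depth_attained[OF assms(4) nonempty(1)] .
  have "subtree_shape (snd B) (vdepth A a) (tree_root B) = subtree_shape (snd C) (vdepth A a) (tree_root C)"
    using subtree_shape_tprod_cancel[OF assms(1-3) nonempty(2,3) a(1)
        subtree_shape_tprod_roots_eq_if_dg_iso[OF assms(1-3) nonempty assms(5)]] .
  then show ?thesis
    unfolding a(2) by (rule dg_iso_trunc_if_subtree_shape_eq[OF assms(2,3) nonempty(2,3)])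
qed

end
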